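(* Let \[D_1=\{t\in[a,b]\cap N_g^-: t\in (D_g\cap[a,t))'\},\quad D_2=\{t\in[a,b]\cap N_g^+: t\in (D_g\cap(t,b])'\},\] \[D_3=\{t\in[a,b]\setminus (N_g\cup D_g): t\in (D_g\cap[a,b])'\},\] and consider the restriction $\Delta g|_{[a,b]}$. For $t\in[a,b]$: 1. If $t^*\in D_1\cup D_2\cup D_3$, then $\Delta g|_{[a,b]}$ is $g$-differentiable at $t$ if and only if $\displaystyle\lim_{s\to t^*,\ s\in D_g}\frac{\Delta g|_{[a,b]}(s)}{g(s)-g(t)}=0$, the limit being the left-hand one if $t^*\in N_g^-$ and the right-hand one if $t^*\in N_g^+$. 2. In any other case, $\Delta g|_{[a,b]}$ is $g$-differentiable at $t$. Furthermore, if $\Delta g|_{[a,b]}$ is $g$-differentiable at $t$, then $(\Delta g|_{[a,b]})'_g(t)=-\chi_{D_g}(t^* )$. In particular, $\Delta g|_{[a,b]}$ is $g$-differentiable on $[a,b]$ with this derivative if $\displaystyle\lim_{s\to t,\ s\in D_g}\frac{\Delta g|_{[a,b]}(s)}{g(s)-g(t)}=0$ for all $t\in D_1\cup D_2\cup D_3$ (with the same convention on one-sided limits).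
   Context: Let $g:\mathbb R\to\mathbb R$ be nondecreasing and left-continuous. $\Delta g(t)=g(t^+)-g(t)$, $D_g=\{t:\Delta g(t)>0\}$, $C_g=\{t: g\text{ constant on }(t-\varepsilon,t+\varepsilon)\text{ for some }\varepsilon>0\}=\bigcup_{n\in\Lambda}(a_n,b_n)$ (disjoint union of connected components), $N_g^-=\{a_n\}\setminus D_g$, $N_g^+=\{b_n\}\setminus D_g$, $N_g=N_g^-\cup N_g^+$. Fix $a<b$ with $a\notin N_g^-$, $b\notin D_g\cup C_g\cup N_g^+$. For $t\in[a,b]$, $t^*=t$ if $t\notin C_g$ and $t^*=b_n$ if $t\in(a_n,b_n)$. The $g$-derivative of $u:[a,b]\to\mathbb R$ at $t$ is $u'_g(t)=\lim_{s\to t}\frac{u(s)-u(t)}{g(s)-g(t)}$ if $t\notin D_g\cup C_g$ and $u'_g(t)=\lim_{s\to t^{*+}}\frac{u(s)-u(t^* )}{g(s)-g(t^* )}$ if $t\in D_g\cup C_g$, provided the finite limit exists; limits are over $s\in[a,b]$ with nonzero denominator, and at points of $N_g^+\cup\{a\}$ only the right-hand limit, at points of $N_g^-\cup\{b\}$ only the left-hand limit is taken. $X'$ is the set of accumulation points of $X$; $\chi_{D_g}$ the indicator of $D_g$. *)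

theory Defs
  imports "HOL-Analysis.Analysis"
begin

definition deltag :: "(real \<Rightarrow> real) \<Rightarrow> real \<Rightarrow> real" where
  "deltag g t = Lim (at_right t) g - g t"

definition Dg :: "(real \<Rightarrow> real) \<Rightarrow> real set" where
  "Dg g = {t. deltag g t > 0}"

definition Cg :: "(real \<Rightarrow> real) \<Rightarrow> real set" where
  "Cg g = {t. \<exists>e>0. \<forall>s\<in>{t-e<..<t+e}. g s = g t}"

definition Nminus :: "(real \<Rightarrow> real) \<Rightarrow> real set" where
  "Nminus g = {x. \<exists>c\<in>Cg g. bdd_below (connected_component_set (Cg g) c)
                     \<and> x = Inf (connected_component_set (Cg g) c)} - Dg g"

definition Nplus :: "(real \<Rightarrow> real) \<Rightarrow> real set" where
  "Nplus g = {x. \<exists>c\<in>Cg g. bdd_above (connected_component_set (Cg g) c)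
                     \<and> x = Sup (connected_component_set (Cg g) c)} - Dg g"

definition Ng :: "(real \<Rightarrow> real) \<Rightarrow> real set" where
  "Ng g = Nminus g \<union> Nplus g"

definition tstar :: "(real \<Rightarrow> real) \<Rightarrow> real \<Rightarrow> real" where
  "tstar g t = (if t \<in> Cg g then Sup (connected_component_set (Cg g) t) else t)"

definition gside :: "(real \<Rightarrow> real) \<Rightarrow> real \<Rightarrow> real \<Rightarrow> real \<Rightarrow> real set" where
  "gside g a b t = (if t \<in> Nplus g \<or> t = a then {t<..}
                    else if t \<in> Nminus g \<or> t = b then {..<t} else UNIV)"

definition has_gderiv ::
  "(real \<Rightarrow> real) \<Rightarrow> real \<Rightarrow> real \<Rightarrow> (real \<Rightarrow> real) \<Rightarrow> real \<Rightarrow> real \<Rightarrow> bool" where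
  "has_gderiv g a b u t L =
     (if t \<in> Dg g \<union> Cg g then
        ((\<lambda>s. (u s - u (tstar g t)) / (g s - g (tstar g t))) \<longlongrightarrow> L)
          (at (tstar g t) within ({tstar g t<..} \<inter> {a..b} \<inter> {s. g s \<noteq> g (tstar g t)}))
      else
        ((\<lambda>s. (u s - u t) / (g s - g t)) \<longlongrightarrow> L)
          (at t within (gside g a b t \<inter> {a..b} \<inter> {s. g s \<noteq> g t})))"

definition g_differentiable ::
  "(real \<Rightarrow> real) \<Rightarrow> real \<Rightarrow> real \<Rightarrow> (real \<Rightarrow> real) \<Rightarrow> real \<Rightarrow> bool" where
  "g_differentiable g a b u t = (\<exists>L. has_gderiv g a b u t L)"

text \<open>Restriction of Delta g to [a,b] (values outside [a,b] are irrelevant).\<close>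
definition deltag_restr :: "(real \<Rightarrow> real) \<Rightarrow> real \<Rightarrow> real \<Rightarrow> real \<Rightarrow> real" where
  "deltag_restr g a b s = (if s \<in> {a..b} then deltag g s else 0)"

definition lside :: "(real \<Rightarrow> real) \<Rightarrow> real \<Rightarrow> real set" where
  "lside g x = (if x \<in> Nminus g then {..<x} else if x \<in> Nplus g then {x<..} else UNIV)"

definition D1 :: "(real \<Rightarrow> real) \<Rightarrow> real \<Rightarrow> real \<Rightarrow> real set" where
  "D1 g a b = {t \<in> {a..b} \<inter> Nminus g. t islimpt (Dg g \<inter> {a..<t})}"

definition D2 :: "(real \<Rightarrow> real) \<Rightarrow> real \<Rightarrow> real \<Rightarrow> real set" where
  "D2 g a b = {t \<in> {a..b} \<inter> Nplus g. t islimpt (Dg g \<inter> {t<..b})}"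

definition D3 :: "(real \<Rightarrow> real) \<Rightarrow> real \<Rightarrow> real \<Rightarrow> real set" where
  "D3 g a b = {t \<in> {a..b} - (Ng g \<union> Dg g). t islimpt (Dg g \<inter> {a..b})}"

end

theory Submission
  imports Defs
begin

text \<open>
  The function \<open>u = \<Delta>g|\<^bsub>[a,b]\<^esub>\<close> vanishes off the countable set \<open>D\<^sub>g\<close>, and a point of
  \<open>C\<^sub>g\<close> has by definition the \<open>g\<close>-derivative of its \<open>t\<^sup>*\<close>, so only points \<open>x \<notin> C\<^sub>g\<close> matter.
  At a jump \<open>x \<in> D\<^sub>g\<close> we have \<open>\<Delta>g(s) \<rightarrow> 0\<close> and \<open>g(s) \<rightarrow> g(x\<^sup>+)\<close> as \<open>s \<rightarrow> x\<^sup>+\<close>, so the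
  difference quotient tends to \<open>-\<Delta>g(x)/\<Delta>g(x) = -1\<close>. At any other \<open>x\<close>, \<open>u(x) = 0\<close> and \<open>g\<close> takes
  the value \<open>g(x)\<close> nowhere else on the admissible side(s), so the quotient \<open>u(s)/(g(s) - g(x))\<close>
  is taken over an interval \<open>I\<close>. It vanishes on \<open>I - D\<^sub>g\<close>, which still accumulates at \<open>x\<close>:
  hence its only possible limit is \<open>0\<close>, and that limit exists iff the quotient tends to \<open>0\<close>
  along \<open>D\<^sub>g \<inter> I\<close> -- a void condition unless \<open>x \<in> D\<^sub>1 \<union> D\<^sub>2 \<union> D\<^sub>3\<close>.
\<close>

section \<open>Sets of reals\<close>

lemma Sup_connected_component_notin:
  fixes S :: "real set"
  assumes "open S" "c \<in> S" "bdd_above (connected_component_set S c)"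
  shows "Sup (connected_component_set S c) \<notin> S"
proof
  let ?C = "connected_component_set S c"
  assume in_S: "Sup ?C \<in> S"
  have "c \<in> ?C" unfolding mem_Collect_eq by (rule connected_component_refl[OF assms(2)])
  then have "Sup ?C \<in> closure ?C"
    using closure_contains_Sup[OF _ assms(3)] by blast
  moreover have "\<forall>y. y islimpt ?C \<and> y \<in> S \<longrightarrow> y \<in> ?C"
    using closedin_connected_component[of S c] unfolding closedin_limpt by blast
  ultimately have "Sup ?C \<in> ?C" using in_S unfolding closure_def by blast
  then obtain e where "e > 0" "ball (Sup ?C) e \<subseteq> ?C"
    using open_connected_component[OF assms(1)] open_contains_ball by blast
  moreover have "Sup ?C + e / 2 \<in> ball (Sup ?C) e" using \<open>e > 0\<close> by (simp add: dist_real_def)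
  ultimately have "Sup ?C + e / 2 \<in> ?C" by blast
  then have "Sup ?C + e / 2 \<le> Sup ?C" by (rule cSup_upper[OF _ assms(3)])
  then show False using \<open>e > 0\<close> by simp
qed

lemma Inf_connected_component_notin:
  fixes S :: "real set"
  assumes "open S" "c \<in> S" "bdd_below (connected_component_set S c)"
  shows "Inf (connected_component_set S c) \<notin> S"
proof
  let ?C = "connected_component_set S c"
  assume in_S: "Inf ?C \<in> S"
  have "c \<in> ?C" unfolding mem_Collect_eq by (rule connected_component_refl[OF assms(2)])
  then have "Inf ?C \<in> closure ?C"
    using closure_contains_Inf[OF _ assms(3)] by blast
  moreover have "\<forall>y. y islimpt ?C \<and> y \<in> S \<longrightarrow> y \<in> ?C"
    using closedin_connected_component[of S c] unfolding closedin_limpt by blast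
  ultimately have "Inf ?C \<in> ?C" using in_S unfolding closure_def by blast
  then obtain e where "e > 0" "ball (Inf ?C) e \<subseteq> ?C"
    using open_connected_component[OF assms(1)] open_contains_ball by blast
  moreover have "Inf ?C - e / 2 \<in> ball (Inf ?C) e" using \<open>e > 0\<close> by (simp add: dist_real_def)
  ultimately have "Inf ?C - e / 2 \<in> ?C" by blast
  then have "Inf ?C - e / 2 \<ge> Inf ?C" by (rule cInf_lower[OF _ assms(3)])
  then show False using \<open>e > 0\<close> by simp
qed

lemma is_interval_atLeastLessThan_Sup_subset:
  fixes C :: "real set"
  assumes "is_interval C" "c \<in> C" "bdd_above C"
  shows "{c..<Sup C} \<subseteq> C"
proof
  fix z assume z: "z \<in> {c..<Sup C}"
  have "C \<noteq> {}" using assms(2) by blast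
  then obtain y where "y \<in> C" "z < y" using less_cSup_iff[of C z] assms(3) z by auto
  then show "z \<in> C" using assms(1,2) z unfolding is_interval_1 by (meson atLeastLessThan_iff less_imp_le)
qed

lemma is_interval_greaterThanAtMost_Inf_subset:
  fixes C :: "real set"
  assumes "is_interval C" "c \<in> C" "bdd_below C"
  shows "{Inf C<..c} \<subseteq> C"
proof
  fix z assume z: "z \<in> {Inf C<..c}"
  have "C \<noteq> {}" using assms(2) by blast
  then obtain y where "y \<in> C" "y < z" using cInf_less_iff[of C z] assms(3) z by auto
  then show "z \<in> C" using assms(1,2) z unfolding is_interval_1 by (meson greaterThanAtMost_iff less_imp_le)
qed

lemma is_interval_Inf_eq:
  fixes C :: "real set"
  assumes "is_interval C" "x \<notin> C" "x < s" "{x<..<s} \<subseteq> C"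
  shows "bdd_below C" "Inf C = x"
proof -
  have m: "(x + s) / 2 \<in> C" using assms(3) by (intro subsetD[OF assms(4)]) simp
  have lower: "x < y" if "y \<in> C" for y
  proof (rule ccontr)
    assume "\<not> x < y"
    then have "y \<le> x" "x \<le> (x + s) / 2" using assms(3) by simp_all
    then have "x \<in> C" using assms(1) that m unfolding is_interval_1 by blast
    with assms(2) show False ..
  qed
  then show bdd: "bdd_below C" unfolding bdd_below_def using less_imp_le by blast
  have "x \<le> Inf C" using m lower by (intro cInf_greatest) (auto intro: less_imp_le)
  moreover have "Inf C \<le> Inf {x<..<s}" using assms(3,4) bdd by (intro cInf_superset_mono) auto
  ultimately show "Inf C = x" using assms(3) by simp
qed

lemma is_interval_Sup_eq:
  fixes C :: "real set"
  assumes "is_interval C" "x \<notin> C" "s < x" "{s<..<x} \<subseteq> C"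
  shows "bdd_above C" "Sup C = x"
proof -
  have m: "(s + x) / 2 \<in> C" using assms(3) by (intro subsetD[OF assms(4)]) simp
  have upper: "y < x" if "y \<in> C" for y
  proof (rule ccontr)
    assume "\<not> y < x"
    then have "(s + x) / 2 \<le> x" "x \<le> y" using assms(3) by simp_all
    then have "x \<in> C" using assms(1) that m unfolding is_interval_1 by blast
    with assms(2) show False ..
  qed
  then show bdd: "bdd_above C" unfolding bdd_above_def using less_imp_le by blast
  have "Sup C \<le> x" using m upper by (intro cSup_least) (auto intro: less_imp_le)
  moreover have "Sup {s<..<x} \<le> Sup C" using assms(3,4) bdd by (intro cSup_subset_mono) auto
  ultimately show "Sup C = x" using assms(3) by simp
qed

lemma islimpt_Diff_countable:
  fixes I D :: "real set"
  assumes "is_interval I" "countable D" "x islimpt I"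
  shows "x islimpt (I - D)"
  unfolding islimpt_approachable
proof (intro allI impI)
  fix e :: real assume "e > 0"
  then obtain y1 where y1: "y1 \<in> I" "y1 \<noteq> x" "dist y1 x < e"
    using assms(3) unfolding islimpt_approachable by blast
  then obtain y2 where y2: "y2 \<in> I" "y2 \<noteq> x" "dist y2 x < dist y1 x"
    using assms(3) unfolding islimpt_approachable by (metis zero_less_dist_iff)
  define lo hi where "lo = min y1 y2" and "hi = max y1 y2"
  have "y1 \<noteq> y2" using y2(3) by auto
  then have "lo < hi" unfolding lo_def hi_def by (auto simp: min_def max_def)
  then have "uncountable {lo<..<hi}" by (simp add: uncountable_open_interval)
  then have "\<not> {lo<..<hi} \<subseteq> insert x D"
    using assms(2) countable_subset[of "{lo<..<hi}" "insert x D"] by auto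
  then obtain z where z: "z \<in> {lo<..<hi}" "z \<noteq> x" "z \<notin> D" by blast
  have "lo \<in> I" "hi \<in> I" using y1(1) y2(1) unfolding lo_def hi_def by (simp_all add: min_def max_def)
  then have "z \<in> I" using assms(1) z(1) unfolding is_interval_1 by (meson greaterThanLessThan_iff less_imp_le)
  have "dist lo x < e" "dist hi x < e"
    using y1(3) y2(3) unfolding lo_def hi_def by (simp_all add: min_def max_def)
  then have "dist z x < e" using z(1) by (auto simp: dist_real_def)
  then show "\<exists>z\<in>I - D. z \<noteq> x \<and> dist z x < e" using z \<open>z \<in> I\<close> by blast
qed

lemma tendsto_zero_within_support_iff:
  assumes "\<And>s. s \<in> I - D \<Longrightarrow> f s = 0"
  shows "(f \<longlongrightarrow> 0) (at x within I) \<longleftrightarrow> (f \<longlongrightarrow> 0) (at x within D \<inter> I)"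
proof
  assume "(f \<longlongrightarrow> 0) (at x within D \<inter> I)"
  moreover have "(f \<longlongrightarrow> 0) (at x within (I - D))"
    using assms by (intro tendsto_eventually) (simp add: eventually_at_filter)
  ultimately have "(f \<longlongrightarrow> 0) (at x within (D \<inter> I \<union> (I - D)))"
    by (simp add: Lim_within_Un)
  moreover have "D \<inter> I \<union> (I - D) = I" by blast
  ultimately show "(f \<longlongrightarrow> 0) (at x within I)" by simp
qed (erule tendsto_within_subset, blast)

lemma tendsto_within_vanishing_off_countable:
  fixes f :: "real \<Rightarrow> 'a::{t2_space, zero}" and I D :: "real set"
  assumes "is_interval I" "countable D" "\<And>s. s \<in> I - D \<Longrightarrow> f s = 0"
    and "(f \<longlongrightarrow> L) (at x within I)"
  shows "(f \<longlongrightarrow> 0) (at x within I)"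
proof (cases "x islimpt I")
  case True
  have "at x within (I - D) \<noteq> bot"
    using islimpt_Diff_countable[OF assms(1,2) True] trivial_limit_within by blast
  moreover have "(f \<longlongrightarrow> L) (at x within (I - D))"
    using assms(4) by (rule tendsto_within_subset) auto
  moreover have "(f \<longlongrightarrow> 0) (at x within (I - D))"
    using assms(3) by (intro tendsto_eventually) (simp add: eventually_at_filter)
  ultimately have "L = 0" by (rule tendsto_unique)
  then show ?thesis using assms(4) by simp
next
  case False
  then have "at x within I = bot" using trivial_limit_within by blast
  then show ?thesis by simp
qed

section \<open>Derivators\<close>

locale derivator =
  fixes g :: "real \<Rightarrow> real"
  assumes mono: "mono g" and continuous_at_left: "\<And>t. continuous (at_left t) g"
begin

lemma tendsto_at_right_Inf: "(g \<longlongrightarrow> Inf (g ` {t<..})) (at_right t)"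
proof -
  have "(g \<longlongrightarrow> Inf (g ` ({t<..} \<inter> UNIV))) (at t within ({t<..} \<inter> UNIV))"
    by (rule Lim_right_bound[where K="g t"]) (auto intro: monoD[OF mono])
  then show ?thesis by simp
qed

lemma deltag_eq_Inf: "deltag g t = Inf (g ` {t<..}) - g t"
  unfolding deltag_def tendsto_Lim[OF trivial_limit_at_right_real tendsto_at_right_Inf] ..

lemma Inf_image_greaterThan_le: "t < s \<Longrightarrow> Inf (g ` {t<..}) \<le> g s"
  by (rule cInf_lower) (auto intro!: bdd_belowI[where m="g t"] monoD[OF mono])

lemma deltag_nonneg: "deltag g t \<ge> 0"
  unfolding deltag_eq_Inf by (simp, rule cInf_greatest) (auto intro: monoD[OF mono])

lemma deltag_eq_0: "t \<notin> Dg g \<Longrightarrow> deltag g t = 0"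
  unfolding Dg_def using deltag_nonneg[of t] by simp

lemma tendsto_at_right_notin_Dg: "t \<notin> Dg g \<Longrightarrow> (g \<longlongrightarrow> g t) (at_right t)"
  using tendsto_at_right_Inf[of t] deltag_eq_0[of t] unfolding deltag_eq_Inf by simp

lemma tendsto_at_left: "(g \<longlongrightarrow> g t) (at_left t)"
  using continuous_at_left[of t] by (simp add: continuous_within)

lemma countable_Dg: "countable (Dg g)"
proof (rule countable_subset[OF _ mono_ctble_discont[OF mono]])
  show "Dg g \<subseteq> {t. \<not> isCont g t}"
  proof clarify
    fix t assume "t \<in> Dg g" "isCont g t"
    from \<open>isCont g t\<close> have "(g \<longlongrightarrow> g t) (at_right t)"
      unfolding isCont_def by (rule tendsto_within_subset) simp
    then have "Inf (g ` {t<..}) = g t"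
      using tendsto_unique[OF trivial_limit_at_right_real tendsto_at_right_Inf] by blast
    with \<open>t \<in> Dg g\<close> show False unfolding Dg_def deltag_eq_Inf by simp
  qed
qed

lemma deltag_tendsto_0_at_right: "(deltag g \<longlongrightarrow> 0) (at_right x)"
proof -
  let ?gx = "Inf (g ` {x<..})"
  have "filterlim (\<lambda>s. 2 * s - x) (at_right x) (at_right x)"
  proof (rule tendsto_imp_filterlim_at_right)
    have "((\<lambda>s. 2 * s - x) \<longlongrightarrow> 2 * x - x) (at_right x)"
      by (intro tendsto_intros)
    then show "((\<lambda>s. 2 * s - x) \<longlongrightarrow> x) (at_right x)" by simp
    show "\<forall>\<^sub>F s in at_right x. x < 2 * s - x"
      using eventually_at_right_less[of x] by eventually_elim simp
  qed
  then have "((\<lambda>s. g (2 * s - x)) \<longlongrightarrow> ?gx) (at_right x)"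
    by (rule filterlim_compose[OF tendsto_at_right_Inf])
  then have upper: "((\<lambda>s. g (2 * s - x) - g s) \<longlongrightarrow> 0) (at_right x)"
    using tendsto_diff[OF _ tendsto_at_right_Inf] by fastforce
  have "\<forall>\<^sub>F s in at_right x. 0 \<le> deltag g s"
    by (simp add: deltag_nonneg)
  moreover have "\<forall>\<^sub>F s in at_right x. deltag g s \<le> g (2 * s - x) - g s"
    using eventually_at_right_less[of x]
    by eventually_elim (simp add: deltag_eq_Inf Inf_image_greaterThan_le)
  ultimately show ?thesis
    by (rule tendsto_sandwich[OF _ _ tendsto_const upper])
qed

lemma open_Cg: "open (Cg g)"
  unfolding open_dist
proof clarify
  fix x assume "x \<in> Cg g"
  then obtain e where "e > 0" and e: "\<forall>s\<in>{x-e<..<x+e}. g s = g x" unfolding Cg_def by blast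
  have "y \<in> Cg g" if y: "dist y x < e" for y
  proof -
    let ?r = "e - dist y x"
    have "{y-?r<..<y+?r} \<subseteq> {x-e<..<x+e}" "y \<in> {x-e<..<x+e}"
      using y by (auto simp: dist_real_def)
    then have "\<forall>s\<in>{y-?r<..<y+?r}. g s = g y" using e by (metis subsetD)
    moreover have "?r > 0" using y by simp
    ultimately show ?thesis unfolding Cg_def by blast
  qed
  with \<open>e > 0\<close> show "\<exists>e>0. \<forall>y. dist y x < e \<longrightarrow> y \<in> Cg g" by blast
qed

lemma Dg_Int_Cg: "Dg g \<inter> Cg g = {}"
proof -
  have "t \<notin> Dg g" if "t \<in> Cg g" for t
  proof -
    obtain e where "e > 0" and e: "\<forall>s\<in>{t-e<..<t+e}. g s = g t"
      using \<open>t \<in> Cg g\<close> unfolding Cg_def by blast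
    have "Inf (g ` {t<..}) \<le> g (t + e/2)" using \<open>e > 0\<close> by (intro Inf_image_greaterThan_le) simp
    also have "\<dots> = g t" using bspec[OF e, of "t + e/2"] \<open>e > 0\<close> by simp
    finally show ?thesis unfolding Dg_def deltag_eq_Inf by simp
  qed
  then show ?thesis by blast
qed

lemma greaterThanLessThan_subset_Cg:
  assumes "x < y" "g x = g y" shows "{x<..<y} \<subseteq> Cg g"
proof
  fix z assume z: "z \<in> {x<..<y}"
  let ?e = "min (z - x) (y - z)"
  have "\<forall>s\<in>{z-?e<..<z+?e}. g s = g z"
  proof
    fix s assume "s \<in> {z-?e<..<z+?e}"
    then have "g x \<le> g s" "g s \<le> g y" "g x \<le> g z" "g z \<le> g y"
      using z by (auto intro!: monoD[OF mono])
    then show "g s = g z" using assms(2) by linarith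
  qed
  moreover have "?e > 0" using z by simp
  ultimately show "z \<in> Cg g" unfolding Cg_def by blast
qed

lemma connected_component_Cg_const:
  assumes "y \<in> connected_component_set (Cg g) c"
  shows "g y = g c"
proof -
  let ?C = "connected_component_set (Cg g) c"
  have locally_const: "\<forall>z\<in>?C. \<forall>\<^sub>F w in at z within ?C. g z = g w"
  proof
    fix z assume "z \<in> ?C"
    then have "z \<in> Cg g" using connected_component_subset by blast
    then obtain e where "e > 0" and e: "\<forall>s\<in>{z-e<..<z+e}. g s = g z" unfolding Cg_def by blast
    have "g z = g w" if "dist w z < e" for w
      using bspec[OF e, of w] that by (simp add: dist_real_def abs_less_iff)
    then show "\<forall>\<^sub>F w in at z within ?C. g z = g w"
      unfolding eventually_at using \<open>e > 0\<close> by blast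
  qed
  have "c \<in> ?C"
    using connected_component_in[of "Cg g" c y] assms connected_component_refl by auto
  from connected_local_const[OF connected_connected_component this assms locally_const]
  show ?thesis by simp
qed

lemma Sup_connected_component_Cg:
  assumes "c \<in> Cg g" "bdd_above (connected_component_set (Cg g) c)"
  defines "x \<equiv> Sup (connected_component_set (Cg g) c)"
  shows "x \<notin> Cg g" "c < x" "g x = g c"
proof -
  let ?C = "connected_component_set (Cg g) c"
  have "c \<in> ?C" unfolding mem_Collect_eq by (rule connected_component_refl[OF assms(1)])
  show "x \<notin> Cg g" unfolding x_def by (rule Sup_connected_component_notin[OF open_Cg assms(1,2)])
  then have "c \<noteq> x" using assms(1) by blast
  moreover have "c \<le> x" unfolding x_def by (rule cSup_upper[OF \<open>c \<in> ?C\<close> assms(2)])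
  ultimately show "c < x" by simp
  then have sub: "{c..<x} \<subseteq> ?C"
    unfolding x_def using assms connected_connected_component is_interval_connected_1
    by (intro is_interval_atLeastLessThan_Sup_subset) auto
  have "g s = g c" if "c < s" "s < x" for s
    by (rule connected_component_Cg_const, rule subsetD[OF sub]) (use that in auto)
  then have "\<forall>\<^sub>F s in at_left x. g s = g c"
    unfolding eventually_at_left_field using \<open>c < x\<close> by blast
  then have "(g \<longlongrightarrow> g c) (at_left x)" by (rule tendsto_eventually)
  then show "g x = g c" using tendsto_unique[OF trivial_limit_at_left_real tendsto_at_left] by blast
qed

lemma Inf_connected_component_Cg:
  assumes "c \<in> Cg g" "bdd_below (connected_component_set (Cg g) c)"
  defines "x \<equiv> Inf (connected_component_set (Cg g) c)"
  shows "x \<notin> Cg g" "c > x" "x \<notin> Dg g \<Longrightarrow> g x = g c"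
proof -
  let ?C = "connected_component_set (Cg g) c"
  have "c \<in> ?C" unfolding mem_Collect_eq by (rule connected_component_refl[OF assms(1)])
  show "x \<notin> Cg g" unfolding x_def by (rule Inf_connected_component_notin[OF open_Cg assms(1,2)])
  then have "c \<noteq> x" using assms(1) by blast
  moreover have "x \<le> c" unfolding x_def by (rule cInf_lower[OF \<open>c \<in> ?C\<close> assms(2)])
  ultimately show "c > x" by simp
  then have sub: "{x<..c} \<subseteq> ?C"
    unfolding x_def using assms connected_connected_component is_interval_connected_1
    by (intro is_interval_greaterThanAtMost_Inf_subset) auto
  have "g s = g c" if "x < s" "s < c" for s
    by (rule connected_component_Cg_const, rule subsetD[OF sub]) (use that in auto)
  then have "\<forall>\<^sub>F s in at_right x. g s = g c"
    unfolding eventually_at_right_field using \<open>c > x\<close> by blast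
  then have "(g \<longlongrightarrow> g c) (at_right x)" by (rule tendsto_eventually)
  moreover assume "x \<notin> Dg g"
  ultimately show "g x = g c"
    using tendsto_unique[OF trivial_limit_at_right_real tendsto_at_right_notin_Dg] by blast
qed

lemma Nminus_Int_Cg: "Nminus g \<inter> Cg g = {}"
  unfolding Nminus_def using Inf_connected_component_Cg(1) by blast

lemma Nminus_iff:
  assumes "x \<notin> Cg g"
  shows "x \<in> Nminus g \<longleftrightarrow> x \<notin> Dg g \<and> (\<exists>s>x. g s = g x)"
proof
  assume "x \<in> Nminus g"
  then obtain c where c: "c \<in> Cg g" "bdd_below (connected_component_set (Cg g) c)"
    and x: "x = Inf (connected_component_set (Cg g) c)" "x \<notin> Dg g"
    unfolding Nminus_def by blast
  have "x < c" "g c = g x" using Inf_connected_component_Cg(2,3)[OF c] x by simp_all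
  with x(2) show "x \<notin> Dg g \<and> (\<exists>s>x. g s = g x)" by blast
next
  assume "x \<notin> Dg g \<and> (\<exists>s>x. g s = g x)"
  then obtain s where "x \<notin> Dg g" "x < s" "g s = g x" by blast
  define m where "m = (x + s) / 2"
  let ?C = "connected_component_set (Cg g) m"
  have "m \<in> {x<..<s}" "{x<..<s} \<subseteq> Cg g"
    using \<open>x < s\<close> greaterThanLessThan_subset_Cg \<open>g s = g x\<close> unfolding m_def by auto
  then have "{x<..<s} \<subseteq> ?C" by (intro connected_component_maximal) auto
  moreover have "is_interval ?C"
    using is_interval_connected_1 connected_connected_component by blast
  moreover have "x \<notin> ?C" using assms connected_component_subset by blast
  ultimately have "bdd_below ?C" "x = Inf ?C"
    using is_interval_Inf_eq[OF _ _ \<open>x < s\<close>] by metis+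
  then show "x \<in> Nminus g"
    unfolding Nminus_def using \<open>m \<in> {x<..<s}\<close> \<open>{x<..<s} \<subseteq> Cg g\<close> \<open>x \<notin> Dg g\<close> by blast
qed

lemma Nplus_iff:
  assumes "x \<notin> Cg g"
  shows "x \<in> Nplus g \<longleftrightarrow> x \<notin> Dg g \<and> (\<exists>s<x. g s = g x)"
proof
  assume "x \<in> Nplus g"
  then obtain c where c: "c \<in> Cg g" "bdd_above (connected_component_set (Cg g) c)"
    and x: "x = Sup (connected_component_set (Cg g) c)" "x \<notin> Dg g"
    unfolding Nplus_def by blast
  have "c < x" "g c = g x" using Sup_connected_component_Cg(2,3)[OF c] x by simp_all
  with x(2) show "x \<notin> Dg g \<and> (\<exists>s<x. g s = g x)" by blast
next
  assume "x \<notin> Dg g \<and> (\<exists>s<x. g s = g x)"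
  then obtain s where "x \<notin> Dg g" "s < x" "g s = g x" by blast
  define m where "m = (s + x) / 2"
  let ?C = "connected_component_set (Cg g) m"
  have "m \<in> {s<..<x}" "{s<..<x} \<subseteq> Cg g"
    using \<open>s < x\<close> greaterThanLessThan_subset_Cg \<open>g s = g x\<close> unfolding m_def by auto
  then have "{s<..<x} \<subseteq> ?C" by (intro connected_component_maximal) auto
  moreover have "is_interval ?C"
    using is_interval_connected_1 connected_connected_component by blast
  moreover have "x \<notin> ?C" using assms connected_component_subset by blast
  ultimately have "bdd_above ?C" "x = Sup ?C"
    using is_interval_Sup_eq[OF _ _ \<open>s < x\<close>] by metis+
  then show "x \<in> Nplus g"
    unfolding Nplus_def using \<open>m \<in> {s<..<x}\<close> \<open>{s<..<x} \<subseteq> Cg g\<close> \<open>x \<notin> Dg g\<close> by blast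
qed

lemma Nminus_Int_Nplus: "Nminus g \<inter> Nplus g = {}"
proof -
  have False if minus: "x \<in> Nminus g" and plus: "x \<in> Nplus g" for x
  proof -
    have "x \<notin> Cg g" using minus Nminus_Int_Cg by blast
    then obtain s1 s2 where "s1 < x" "g s1 = g x" "x < s2" "g s2 = g x"
      using minus plus Nminus_iff Nplus_iff by metis
    then have "x \<in> Cg g" using greaterThanLessThan_subset_Cg[of s1 s2] by auto
    with \<open>x \<notin> Cg g\<close> show False ..
  qed
  then show ?thesis by blast
qed

lemma tstar_of_Cg:
  assumes "t \<in> Cg g" "t \<le> b" "b \<notin> Cg g"
  shows "t < tstar g t" "tstar g t \<le> b" "tstar g t \<notin> Cg g" "g (tstar g t) = g t"
    "tstar g t \<in> Dg g \<union> Nplus g"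
proof -
  let ?C = "connected_component_set (Cg g) t"
  have x: "tstar g t = Sup ?C" unfolding tstar_def using assms(1) by simp
  have "is_interval ?C"
    using is_interval_connected_1 connected_connected_component by blast
  moreover have "t \<in> ?C" unfolding mem_Collect_eq by (rule connected_component_refl[OF assms(1)])
  moreover have "b \<notin> ?C" using assms(3) connected_component_subset by blast
  ultimately have below_b: "y < b" if "y \<in> ?C" for y
    using that assms(2) unfolding is_interval_1 by (meson not_less)
  then have bdd: "bdd_above ?C" unfolding bdd_above_def using less_imp_le by blast
  show "t < tstar g t" "tstar g t \<notin> Cg g" "g (tstar g t) = g t"
    unfolding x using Sup_connected_component_Cg[OF assms(1) bdd] by simp_all
  show "tstar g t \<le> b"
    unfolding x using \<open>t \<in> ?C\<close> by (intro cSup_least less_imp_le[OF below_b]) blast+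
  show "tstar g t \<in> Dg g \<union> Nplus g"
    unfolding x Nplus_def using assms(1) bdd by blast
qed

lemma tstar_eq_self: "t \<notin> Cg g \<Longrightarrow> tstar g t = t"
  by (simp add: tstar_def)

lemma tstar_notin_Cg: "t \<le> b \<Longrightarrow> b \<notin> Cg g \<Longrightarrow> tstar g t \<notin> Cg g"
  using tstar_of_Cg(3) tstar_eq_self by metis

lemma g_tstar: "t \<le> b \<Longrightarrow> b \<notin> Cg g \<Longrightarrow> g (tstar g t) = g t"
  using tstar_of_Cg(4) tstar_eq_self by metis

lemma tstar_atLeastAtMost: "t \<in> {a..b} \<Longrightarrow> b \<notin> Cg g \<Longrightarrow> tstar g t \<in> {a..b}"
  using tstar_of_Cg(1,2)[of t b] tstar_eq_self[of t] by fastforce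

text \<open>At \<open>t \<in> C\<^sub>g\<close> the definition prescribes the right-hand derivative at \<open>t\<^sup>*\<close>, which is
  also what it prescribes at \<open>t\<^sup>* \<in> D\<^sub>g \<union> N\<^sub>g\<^sup>+\<close> itself.\<close>
lemma has_gderiv_tstar_iff:
  assumes "t \<le> b" "b \<notin> Cg g"
  shows "has_gderiv g a b u t L \<longleftrightarrow> has_gderiv g a b u (tstar g t) L"
proof (cases "t \<in> Cg g")
  case True
  let ?x = "tstar g t"
  have "?x \<notin> Cg g" "?x \<in> Dg g \<union> Nplus g" using tstar_of_Cg[OF True assms] by simp_all
  then have "tstar g ?x = ?x" by (intro tstar_eq_self)
  consider "?x \<in> Dg g" | "?x \<notin> Dg g \<union> Cg g" "gside g a b ?x = {?x<..}"
    using \<open>?x \<notin> Cg g\<close> \<open>?x \<in> Dg g \<union> Nplus g\<close> unfolding gside_def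
    by (cases "?x \<in> Dg g") auto
  then show ?thesis
    using True \<open>tstar g ?x = ?x\<close> unfolding has_gderiv_def by cases simp_all
next
  case False
  then show ?thesis by (simp add: tstar_eq_self)
qed

lemma g_differentiable_tstar_iff:
  "t \<le> b \<Longrightarrow> b \<notin> Cg g \<Longrightarrow>
    g_differentiable g a b u t \<longleftrightarrow> g_differentiable g a b u (tstar g t)"
  unfolding g_differentiable_def using has_gderiv_tstar_iff by blast

end

section \<open>The \<open>g\<close>-derivative of the jump function\<close>

lemma Dg_Int_D1_D2_D3: "Dg g \<inter> (D1 g a b \<union> D2 g a b \<union> D3 g a b) = {}"
  unfolding D1_def D2_def D3_def Nminus_def Nplus_def by blast

locale derivator_interval = derivator +
  fixes a b :: real
  assumes a_notin_Nminus: "a \<notin> Nminus g"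
    and b_notin: "b \<notin> Dg g \<union> Cg g \<union> Nplus g"
begin

lemma gside_Int_eq_lside:
  assumes "x \<in> {a..b}" "x \<notin> Cg g \<union> Dg g"
  shows "gside g a b x \<inter> {a..b} \<inter> {s. g s \<noteq> g x} = lside g x \<inter> {a..b} - {x}"
proof -
  have right: "g s \<noteq> g x" if "x \<notin> Nminus g" "x < s" for s
    using that Nminus_iff assms(2) by blast
  have left: "g s \<noteq> g x" if "x \<notin> Nplus g" "s < x" for s
    using that Nplus_iff assms(2) by blast
  consider (plus) "x \<in> Nplus g" "x \<notin> Nminus g" | (minus) "x \<in> Nminus g" "x \<notin> Nplus g" "x \<noteq> a"
    | (neither) "x \<notin> Nplus g" "x \<notin> Nminus g"
    using Nminus_Int_Nplus a_notin_Nminus by blast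
  then show ?thesis
  proof cases
    case plus
    then have "gside g a b x = {x<..}" "lside g x = {x<..}"
      by (simp_all add: gside_def lside_def)
    then show ?thesis using right[OF plus(2)] by auto
  next
    case minus
    then have "gside g a b x = {..<x}" "lside g x = {..<x}"
      by (simp_all add: gside_def lside_def)
    then show ?thesis using left[OF minus(2)] by auto
  next
    case neither
    then have "gside g a b x \<inter> {a..b} - {x} = {a..b} - {x}" "lside g x = UNIV"
      by (auto simp: gside_def lside_def)
    moreover have "g s \<noteq> g x \<longleftrightarrow> s \<noteq> x" for s
      using left[OF neither(1), of s] right[OF neither(2), of s]
      by (cases s x rule: linorder_cases) simp_all
    then have "{s. g s \<noteq> g x} = - {x}" by blast
    ultimately show ?thesis by (simp add: Diff_eq Int_assoc)
  qed
qed

lemma is_interval_lside_Int: "is_interval (lside g x \<inter> {a..b})"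
  unfolding lside_def is_interval_1 by auto

lemma not_islimpt_Dg_lside:
  assumes "x \<in> {a..b}" "x \<notin> Cg g \<union> Dg g" "x \<notin> D1 g a b \<union> D2 g a b \<union> D3 g a b"
  shows "\<not> x islimpt (Dg g \<inter> {a..b} \<inter> lside g x)"
proof -
  consider (minus) "x \<in> Nminus g" | (plus) "x \<in> Nplus g" "x \<notin> Nminus g"
    | (neither) "x \<notin> Nplus g" "x \<notin> Nminus g"
    by blast
  then show ?thesis
  proof cases
    case minus
    then have "Dg g \<inter> {a..b} \<inter> lside g x = Dg g \<inter> {a..<x}"
      using assms(1) by (auto simp: lside_def)
    then show ?thesis using assms minus unfolding D1_def by auto
  next
    case plus
    then have "Dg g \<inter> {a..b} \<inter> lside g x = Dg g \<inter> {x<..b}"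
      using assms(1) by (auto simp: lside_def)
    then show ?thesis using assms plus unfolding D2_def by auto
  next
    case neither
    then show ?thesis using assms unfolding D3_def Ng_def lside_def by auto
  qed
qed

lemma has_gderiv_deltag_restr_Dg:
  assumes "x \<in> Dg g" "x \<in> {a..b}"
  shows "has_gderiv g a b (deltag_restr g a b) x (-1)"
proof -
  let ?u = "deltag_restr g a b" and ?gx = "Inf (g ` {x<..})"
  have "x < b" using assms b_notin by force
  have "tstar g x = x" using assms(1) Dg_Int_Cg by (intro tstar_eq_self) blast
  have jump: "?u x = ?gx - g x" "?gx - g x > 0"
    using assms unfolding deltag_restr_def Dg_def deltag_eq_Inf by auto
  have "\<forall>\<^sub>F s in at_right x. deltag g s = ?u s"
    unfolding eventually_at_right_field using \<open>x < b\<close> assms(2)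
    by (intro exI[of _ b]) (auto simp: deltag_restr_def)
  with deltag_tendsto_0_at_right have "(?u \<longlongrightarrow> 0) (at_right x)"
    by (rule Lim_transform_eventually)
  then have "((\<lambda>s. (?u s - ?u x) / (g s - g x)) \<longlongrightarrow> (0 - (?gx - g x)) / (?gx - g x)) (at_right x)"
    unfolding jump(1) using tendsto_at_right_Inf jump(2) by (intro tendsto_intros) auto
  moreover have "(0 - (?gx - g x)) / (?gx - g x) = -1"
    using jump(2) by (simp add: field_simps)
  ultimately have "((\<lambda>s. (?u s - ?u x) / (g s - g x)) \<longlongrightarrow> -1) (at_right x)"
    by simp
  then have "((\<lambda>s. (?u s - ?u x) / (g s - g x)) \<longlongrightarrow> -1)
      (at x within {x<..} \<inter> {a..b} \<inter> {s. g s \<noteq> g x})"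
    by (rule tendsto_within_subset) auto
  then show ?thesis
    unfolding has_gderiv_def using assms(1) \<open>tstar g x = x\<close> by simp
qed

lemma has_gderiv_deltag_restr_iff:
  assumes "x \<in> {a..b}" "x \<notin> Cg g \<union> Dg g"
  shows "has_gderiv g a b (deltag_restr g a b) x L \<longleftrightarrow>
    ((\<lambda>s. deltag_restr g a b s / (g s - g x)) \<longlongrightarrow> L) (at x within lside g x \<inter> {a..b})"
proof -
  have "deltag_restr g a b x = 0" using assms(2) by (simp add: deltag_restr_def deltag_eq_0)
  moreover have "at x within (lside g x \<inter> {a..b} - {x}) = at x within (lside g x \<inter> {a..b})"
    by (simp add: at_within_def)
  ultimately show ?thesis
    using assms unfolding has_gderiv_def gside_Int_eq_lside[OF assms] by simp
qed

lemma g_differentiable_deltag_restr_iff: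
  assumes "x \<in> {a..b}" "x \<notin> Cg g \<union> Dg g"
  shows "g_differentiable g a b (deltag_restr g a b) x \<longleftrightarrow>
    ((\<lambda>s. deltag_restr g a b s / (g s - g x)) \<longlongrightarrow> 0) (at x within Dg g \<inter> {a..b} \<inter> lside g x)"
proof -
  let ?f = "\<lambda>s. deltag_restr g a b s / (g s - g x)" and ?I = "lside g x \<inter> {a..b}"
  have vanish: "?f s = 0" if "s \<in> ?I - Dg g" for s
    using that by (simp add: deltag_restr_def deltag_eq_0)
  have "g_differentiable g a b (deltag_restr g a b) x \<longleftrightarrow> (\<exists>L. (?f \<longlongrightarrow> L) (at x within ?I))"
    unfolding g_differentiable_def has_gderiv_deltag_restr_iff[OF assms] ..
  also have "\<dots> \<longleftrightarrow> (?f \<longlongrightarrow> 0) (at x within ?I)"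
    using tendsto_within_vanishing_off_countable[of ?I "Dg g" ?f] is_interval_lside_Int countable_Dg vanish
    by blast
  also have "\<dots> \<longleftrightarrow> (?f \<longlongrightarrow> 0) (at x within Dg g \<inter> ?I)"
    using tendsto_zero_within_support_iff[of ?I "Dg g" ?f] vanish by blast
  finally show ?thesis by (simp add: Int_ac)
qed

lemma b_notin_Cg: "b \<notin> Cg g"
  using b_notin by blast

lemma tstar_atLeastAtMost_Diff_Cg:
  assumes "t \<in> {a..b}" shows "tstar g t \<in> {a..b} - Cg g"
  using tstar_atLeastAtMost[OF assms b_notin_Cg] tstar_notin_Cg[OF _ b_notin_Cg, of t] assms by simp

lemma g_differentiable_deltag_restr_iff_tstar:
  assumes "t \<in> {a..b}" "tstar g t \<in> D1 g a b \<union> D2 g a b \<union> D3 g a b"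
  shows "g_differentiable g a b (deltag_restr g a b) t \<longleftrightarrow>
    ((\<lambda>s. deltag_restr g a b s / (g s - g t)) \<longlongrightarrow> 0)
      (at (tstar g t) within Dg g \<inter> {a..b} \<inter> lside g (tstar g t))"
proof -
  have x: "tstar g t \<in> {a..b}" "tstar g t \<notin> Cg g \<union> Dg g"
    using tstar_atLeastAtMost_Diff_Cg[OF assms(1)] assms(2) Dg_Int_D1_D2_D3 by auto
  have "t \<le> b" using assms(1) by simp
  show ?thesis
    unfolding g_differentiable_tstar_iff[OF \<open>t \<le> b\<close> b_notin_Cg]
      g_differentiable_deltag_restr_iff[OF x] g_tstar[OF \<open>t \<le> b\<close> b_notin_Cg] ..
qed

lemma g_differentiable_deltag_restr:
  assumes "t \<in> {a..b}" "tstar g t \<notin> D1 g a b \<union> D2 g a b \<union> D3 g a b"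
  shows "g_differentiable g a b (deltag_restr g a b) t"
proof -
  let ?x = "tstar g t"
  have x: "?x \<in> {a..b}" "?x \<notin> Cg g" using tstar_atLeastAtMost_Diff_Cg[OF assms(1)] by simp_all
  have "g_differentiable g a b (deltag_restr g a b) ?x"
  proof (cases "?x \<in> Dg g")
    case True
    then show ?thesis
      using has_gderiv_deltag_restr_Dg x(1) unfolding g_differentiable_def by blast
  next
    case False
    then have "?x \<notin> Cg g \<union> Dg g" using x(2) by blast
    moreover from this have "at ?x within Dg g \<inter> {a..b} \<inter> lside g ?x = bot"
      using not_islimpt_Dg_lside x(1) assms(2) trivial_limit_within by blast
    ultimately show ?thesis using g_differentiable_deltag_restr_iff[OF x(1)] by simp
  qed
  then show ?thesis using assms(1) g_differentiable_tstar_iff b_notin_Cg by simp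
qed

lemma has_gderiv_deltag_restr:
  assumes "t \<in> {a..b}" "g_differentiable g a b (deltag_restr g a b) t"
  shows "has_gderiv g a b (deltag_restr g a b) t (- indicator (Dg g) (tstar g t))"
proof -
  let ?x = "tstar g t"
  have x: "?x \<in> {a..b}" "?x \<notin> Cg g" using tstar_atLeastAtMost_Diff_Cg[OF assms(1)] by simp_all
  have "has_gderiv g a b (deltag_restr g a b) ?x (- indicator (Dg g) ?x)"
  proof (cases "?x \<in> Dg g")
    case True
    then show ?thesis using has_gderiv_deltag_restr_Dg x(1) by simp
  next
    case False
    then have x': "?x \<notin> Cg g \<union> Dg g" using x(2) by blast
    let ?f = "\<lambda>s. deltag_restr g a b s / (g s - g ?x)" and ?I = "lside g ?x \<inter> {a..b}"
    have vanish: "?f s = 0" if "s \<in> ?I - Dg g" for s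
      using that by (simp add: deltag_restr_def deltag_eq_0)
    have "g_differentiable g a b (deltag_restr g a b) ?x"
      using assms g_differentiable_tstar_iff b_notin_Cg by simp
    then obtain L where "(?f \<longlongrightarrow> L) (at ?x within ?I)"
      unfolding g_differentiable_def has_gderiv_deltag_restr_iff[OF x(1) x'] by blast
    then have "(?f \<longlongrightarrow> 0) (at ?x within ?I)"
      using tendsto_within_vanishing_off_countable[of ?I "Dg g" ?f] is_interval_lside_Int
        countable_Dg vanish
      by blast
    then show ?thesis using has_gderiv_deltag_restr_iff[OF x(1) x'] False by simp
  qed
  then show ?thesis using assms(1) has_gderiv_tstar_iff b_notin_Cg by simp
qed

end

theorem corollary3p6:
  fixes g :: "real \<Rightarrow> real" and a b :: real
  assumes mono: "mono g"
    and leftcont: "\<And>t. continuous (at_left t) g"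
    and ab: "a < b"
    and a_notin: "a \<notin> Nminus g"
    and b_notin: "b \<notin> Dg g \<union> Cg g \<union> Nplus g"
  shows "(\<forall>t\<in>{a..b}.
            (tstar g t \<in> D1 g a b \<union> D2 g a b \<union> D3 g a b \<longrightarrow>
               (g_differentiable g a b (deltag_restr g a b) t \<longleftrightarrow>
                ((\<lambda>s. deltag_restr g a b s / (g s - g t)) \<longlongrightarrow> 0)
                  (at (tstar g t) within (Dg g \<inter> {a..b} \<inter> lside g (tstar g t)))))
          \<and> (tstar g t \<notin> D1 g a b \<union> D2 g a b \<union> D3 g a b \<longrightarrow>
               g_differentiable g a b (deltag_restr g a b) t)
          \<and> (g_differentiable g a b (deltag_restr g a b) t \<longrightarrow>
               has_gderiv g a b (deltag_restr g a b) t (- indicator (Dg g) (tstar g t))))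
       \<and> ((\<forall>t\<in>D1 g a b \<union> D2 g a b \<union> D3 g a b.
             ((\<lambda>s. deltag_restr g a b s / (g s - g t)) \<longlongrightarrow> 0)
               (at t within (Dg g \<inter> {a..b} \<inter> lside g t)))
          \<longrightarrow> (\<forall>t\<in>{a..b}. has_gderiv g a b (deltag_restr g a b) t
                              (- indicator (Dg g) (tstar g t))))"
proof -
  interpret derivator_interval g a b
    using mono leftcont a_notin b_notin
    by (simp add: derivator_interval_def derivator_interval_axioms_def derivator_def)
  let ?u = "deltag_restr g a b" and ?D = "D1 g a b \<union> D2 g a b \<union> D3 g a b"
  have "g_differentiable g a b ?u t"
    if limits: "\<forall>x\<in>?D. ((\<lambda>s. ?u s / (g s - g x)) \<longlongrightarrow> 0)
        (at x within Dg g \<inter> {a..b} \<inter> lside g x)"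
      and t: "t \<in> {a..b}" for t
  proof (cases "tstar g t \<in> ?D")
    case True
    with limits have "((\<lambda>s. ?u s / (g s - g (tstar g t))) \<longlongrightarrow> 0)
        (at (tstar g t) within Dg g \<inter> {a..b} \<inter> lside g (tstar g t))" by blast
    then show ?thesis
      using g_differentiable_deltag_restr_iff_tstar[OF t True] g_tstar[OF _ b_notin_Cg, of t] t
      by simp
  qed (rule g_differentiable_deltag_restr[OF t])
  then show ?thesis
    using g_differentiable_deltag_restr_iff_tstar g_differentiable_deltag_restr has_gderiv_deltag_restr
    by blast
qed

end
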